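(* Let $k,t\ge1$ be integers and let $D$ be a digraph with $\mathrm{dtw}(D)<k$. Then either $D$ contains $t$ pairwise vertex-disjoint even dicycles, or there exists a set $A\subseteq V(D)$ with $|A|\le k(t-1)$ such that $D-A$ contains no even dicycle.
   Context: A dicycle is even if it has an even number of edges. An arborescence is a rooted tree with all edges oriented away from the root; $T_t$ denotes the subarborescence rooted at $t$. $Y$ strongly guards $X$ (for $X,Y\subseteq V(D)$) if every directed walk starting and ending in $X$ and containing a vertex outside $X$ contains a vertex of $Y$. A directed tree decomposition of $D$ is $(T,\beta,\gamma)$ with $T$ an arborescence, $\beta\colon V(T)\to2^{V(D)}$ such that the nonempty bags $\beta(t)$ partition $V(D)$, and $\gamma\colon E(T)\to 2^{V(D)}$ such that for each $(d,t)\in E(T)$, $\gamma(d,t)$ strongly guards $\bigcup_{t'\in V(T_t)}\beta(t')$. With $\Gamma(t):=\beta(t)\cup\bigcup_{e\text{ incident with }t}\gamma(e)$, the width is $\max_t|\Gamma(t)|-1$, and the directed treewidth $\mathrm{dtw}(D)$ is the minimum width of a directed tree decomposition of $D$. *)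

theory Defs
  imports Main
begin

definition is_dicycle :: "'a set \<Rightarrow> ('a \<times> 'a) set \<Rightarrow> 'a list \<Rightarrow> bool" where
  "is_dicycle V E cs \<longleftrightarrow> cs \<noteq> [] \<and> distinct cs \<and> set cs \<subseteq> V \<and>
     (\<forall>i < length cs. (cs ! i, cs ! ((i + 1) mod length cs)) \<in> E)"

definition is_even_dicycle :: "'a set \<Rightarrow> ('a \<times> 'a) set \<Rightarrow> 'a list \<Rightarrow> bool" where
  "is_even_dicycle V E cs \<longleftrightarrow> is_dicycle V E cs \<and> even (length cs)"

definition del_verts_V :: "'a set \<Rightarrow> 'a set \<Rightarrow> 'a set" where
  "del_verts_V V A = V - A"

definition del_verts_E :: "('a \<times> 'a) set \<Rightarrow> 'a set \<Rightarrow> ('a \<times> 'a) set" where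
  "del_verts_E E A = {(u, v). (u, v) \<in> E \<and> u \<notin> A \<and> v \<notin> A}"

definition is_walk :: "'a set \<Rightarrow> ('a \<times> 'a) set \<Rightarrow> 'a list \<Rightarrow> bool" where
  "is_walk V E w \<longleftrightarrow> w \<noteq> [] \<and> set w \<subseteq> V \<and>
     (\<forall>i. Suc i < length w \<longrightarrow> (w ! i, w ! Suc i) \<in> E)"

definition strongly_guards :: "'a set \<Rightarrow> ('a \<times> 'a) set \<Rightarrow> 'a set \<Rightarrow> 'a set \<Rightarrow> bool" where
  "strongly_guards V E Y X \<longleftrightarrow>
     (\<forall>w. is_walk V E w \<and> hd w \<in> X \<and> last w \<in> X \<and> (\<exists>v \<in> set w. v \<notin> X)
          \<longrightarrow> (\<exists>v \<in> set w. v \<in> Y))"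

definition is_arborescence :: "'b set \<Rightarrow> ('b \<times> 'b) set \<Rightarrow> 'b \<Rightarrow> bool" where
  "is_arborescence N ET r \<longleftrightarrow> finite N \<and> r \<in> N \<and> ET \<subseteq> N \<times> N \<and>
     (\<forall>d. (d, r) \<notin> ET) \<and>
     (\<forall>t \<in> N. t \<noteq> r \<longrightarrow> (\<exists>!d. (d, t) \<in> ET)) \<and>
     (\<forall>t \<in> N. (r, t) \<in> ET\<^sup>*)"

definition subarb :: "('b \<times> 'b) set \<Rightarrow> 'b \<Rightarrow> 'b set" where
  "subarb ET t = {t'. (t, t') \<in> ET\<^sup>*}"

definition is_dtd ::
  "'a set \<Rightarrow> ('a \<times> 'a) set \<Rightarrow> 'b set \<Rightarrow> ('b \<times> 'b) set \<Rightarrow> 'b \<Rightarrow>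
   ('b \<Rightarrow> 'a set) \<Rightarrow> ('b \<times> 'b \<Rightarrow> 'a set) \<Rightarrow> bool" where
  "is_dtd V E N ET r \<beta> \<gamma> \<longleftrightarrow> is_arborescence N ET r \<and>
     (\<forall>t \<in> N. \<beta> t \<subseteq> V) \<and> (\<Union>t \<in> N. \<beta> t) = V \<and>
     (\<forall>t \<in> N. \<forall>t' \<in> N. t \<noteq> t' \<longrightarrow> \<beta> t \<inter> \<beta> t' = {}) \<and>
     (\<forall>e \<in> ET. \<gamma> e \<subseteq> V) \<and>
     (\<forall>(d, t) \<in> ET. strongly_guards V E (\<gamma> (d, t)) (\<Union>t' \<in> subarb ET t. \<beta> t'))"

definition Gamma :: "('b \<times> 'b) set \<Rightarrow> ('b \<Rightarrow> 'a set) \<Rightarrow> ('b \<times> 'b \<Rightarrow> 'a set) \<Rightarrow> 'b \<Rightarrow> 'a set" where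
  "Gamma ET \<beta> \<gamma> t = \<beta> t \<union> (\<Union>e \<in> {e \<in> ET. fst e = t \<or> snd e = t}. \<gamma> e)"

definition dtd_width :: "'b set \<Rightarrow> ('b \<times> 'b) set \<Rightarrow> ('b \<Rightarrow> 'a set) \<Rightarrow> ('b \<times> 'b \<Rightarrow> 'a set) \<Rightarrow> int" where
  "dtd_width N ET \<beta> \<gamma> = int (Max ((\<lambda>t. card (Gamma ET \<beta> \<gamma> t)) ` N)) - 1"

text \<open>Directed treewidth: minimum width over all directed tree decompositions
  (tree nodes taken from nat, which suffices since arborescences are finite).\<close>
definition dtw :: "'a set \<Rightarrow> ('a \<times> 'a) set \<Rightarrow> int" where
  "dtw V E = (LEAST w. \<exists>(N :: nat set) ET r \<beta> \<gamma>. is_dtd V E N ET r \<beta> \<gamma> \<and> dtd_width N ET \<beta> \<gamma> = w)"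

end

theory Submission
  imports Defs
begin

text \<open>Work with any family of dicycles. Pick a node \<open>t\<close>
  of a decomposition of width \<open>< k\<close> whose subarborescence \<open>T\<^sub>t\<close> contains a cycle of the
  family, with \<open>T\<^sub>t\<close> as small as possible. A dicycle avoiding \<open>\<Gamma>(t)\<close> but meeting the bags of
  \<open>T\<^sub>t\<close> is trapped, by strong guarding, in the bags of some child subtree, contradicting
  minimality. So deleting the at most \<open>k\<close> vertices of \<open>\<Gamma>(t)\<close> separates the cycles inside
  \<open>T\<^sub>t\<close> from all others; either one such cycle extends a packing of the rest, or \<open>\<Gamma>(t)\<close>
  extends a hitting set of the rest, and induction on the number of cycles finishes.\<close>

definition subarb_verts :: "('b \<times> 'b) set \<Rightarrow> ('b \<Rightarrow> 'a set) \<Rightarrow> 'b \<Rightarrow> 'a set" where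
  "subarb_verts ET \<beta> t = (\<Union>t' \<in> subarb ET t. \<beta> t')"

definition cycle_packing :: "('a list \<Rightarrow> bool) \<Rightarrow> 'a set \<Rightarrow> 'a list list \<Rightarrow> bool" where
  "cycle_packing Q W Cs \<longleftrightarrow> (\<forall>C \<in> set Cs. Q C \<and> set C \<subseteq> W) \<and>
     (\<forall>i < length Cs. \<forall>j < length Cs. i \<noteq> j \<longrightarrow> set (Cs ! i) \<inter> set (Cs ! j) = {})"

definition hitting_set :: "('a list \<Rightarrow> bool) \<Rightarrow> 'a set \<Rightarrow> 'a set \<Rightarrow> bool" where
  "hitting_set Q W A \<longleftrightarrow> A \<subseteq> W \<and> (\<forall>cs. Q cs \<and> set cs \<subseteq> W \<longrightarrow> set cs \<inter> A \<noteq> {})"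

lemma cycle_packing_Cons:
  assumes "cycle_packing Q W Cs" "Q C" "set C \<subseteq> W" "\<forall>D \<in> set Cs. set C \<inter> set D = {}"
  shows "cycle_packing Q W (C # Cs)"
  using assms unfolding cycle_packing_def
  by (auto simp: less_Suc_eq_0_disj) (blast dest: nth_mem)+

lemma dicycle_closed_walk:
  assumes "is_dicycle V E cs" "u \<in> set cs"
  obtains w where "is_walk V E w" "hd w = u" "last w = u" "set w = set cs"
proof -
  let ?n = "length cs"
  obtain i where i: "i < ?n" "cs ! i = u" using assms(2) by (metis in_set_conv_nth)
  let ?w = "rotate i cs @ [u]"
  have cyc: "\<forall>j < ?n. (cs ! j, cs ! ((j + 1) mod ?n)) \<in> E" and "set cs \<subseteq> V"
    using assms(1) unfolding is_dicycle_def by auto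
  have set_w: "set ?w = set cs" using assms(2) by (auto simp: set_rotate)
  have nth_w: "?w ! j = cs ! ((i + j) mod ?n)" if "j \<le> ?n" for j
    using that i by (cases "j < ?n") (auto simp: nth_append nth_rotate)
  have "is_walk V E ?w"
    unfolding is_walk_def
  proof (intro conjI allI impI)
    show "set ?w \<subseteq> V" using set_w \<open>set cs \<subseteq> V\<close> by simp
  next
    fix j assume "Suc j < length ?w"
    then have "Suc j \<le> ?n" by simp
    moreover have "(i + j) mod ?n < ?n" using i(1) by (auto intro: mod_less_divisor)
    then have "(cs ! ((i + j) mod ?n), cs ! (((i + j) mod ?n + 1) mod ?n)) \<in> E"
      using cyc by blast
    moreover have "((i + j) mod ?n + 1) mod ?n = (i + Suc j) mod ?n" by (simp add: mod_Suc_eq)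
    ultimately show "(?w ! j, ?w ! Suc j) \<in> E" using nth_w[of j] nth_w[of "Suc j"] by simp
  qed simp
  moreover have "hd ?w = u" using nth_w[of 0] i by (simp add: hd_conv_nth)
  moreover have "last ?w = u" by simp
  ultimately show thesis using set_w by (rule that)
qed

lemma strongly_guards_dicycle:
  assumes "strongly_guards V E Y X" "is_dicycle V E cs"
    and "set cs \<inter> Y = {}" "set cs \<inter> X \<noteq> {}"
  shows "set cs \<subseteq> X"
proof (rule ccontr)
  assume "\<not> set cs \<subseteq> X"
  then obtain v where "v \<in> set cs" "v \<notin> X" by blast
  obtain u where "u \<in> set cs" "u \<in> X" using assms(4) by blast
  then obtain w where w: "is_walk V E w" "hd w = u" "last w = u" "set w = set cs"
    using dicycle_closed_walk[OF assms(2)] by blast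
  have "\<exists>y \<in> set w. y \<in> Y"
    using assms(1)[unfolded strongly_guards_def, rule_format, of w] w \<open>u \<in> X\<close> \<open>v \<in> set cs\<close> \<open>v \<notin> X\<close>
    by auto
  then show False using assms(3) w(4) by auto
qed

lemma is_dicycle_del_verts:
  assumes "is_dicycle (del_verts_V V A) (del_verts_E E A) cs"
  shows "is_dicycle V E cs" "set cs \<inter> A = {}"
  using assms unfolding is_dicycle_def del_verts_V_def del_verts_E_def by auto

lemma arborescence_acyclic:
  assumes "is_arborescence N ET r"
  shows "(x, x) \<notin> ET\<^sup>+"
proof
  assume "(x, x) \<in> ET\<^sup>+"
  have ET_N: "ET \<subseteq> N \<times> N" and root: "\<forall>d. (d, r) \<notin> ET"
    and parent: "\<forall>t \<in> N. t \<noteq> r \<longrightarrow> (\<exists>!d. (d, t) \<in> ET)" and reach: "\<forall>t \<in> N. (r, t) \<in> ET\<^sup>*"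
    using assms unfolding is_arborescence_def by auto
  from \<open>(x, x) \<in> ET\<^sup>+\<close> have "x \<in> N" using ET_N by (auto dest: tranclD2)
  then have "(r, x) \<in> ET\<^sup>*" using reach by blast
  then show False using \<open>(x, x) \<in> ET\<^sup>+\<close>
  proof (induction rule: rtrancl_induct)
    case base
    then show False using root by (auto dest: tranclD2)
  next
    case (step p y)
    txt \<open>On a cycle through \<open>y\<close>, the predecessor of \<open>y\<close> is its unique parent \<open>p\<close>.\<close>
    from \<open>(y, y) \<in> ET\<^sup>+\<close> obtain q where "(y, q) \<in> ET\<^sup>*" "(q, y) \<in> ET" by (metis tranclD2)
    moreover have "y \<in> N" "y \<noteq> r" using step.hyps(2) ET_N root by auto
    ultimately have "q = p" using parent step.hyps(2) by blast
    then have "(p, p) \<in> ET\<^sup>+" using step.hyps(2) \<open>(y, q) \<in> ET\<^sup>*\<close> by (metis rtrancl_into_trancl2)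
    then show False by (rule step.IH)
  qed
qed

lemma finite_subarb:
  assumes "is_arborescence N ET r" "t \<in> N"
  shows "finite (subarb ET t)"
proof -
  have "subarb ET t \<subseteq> N"
    using assms unfolding is_arborescence_def subarb_def by (auto elim: rtranclE)
  then show ?thesis using assms(1) finite_subset unfolding is_arborescence_def by blast
qed

lemma subarb_child_psubset:
  assumes "is_arborescence N ET r" "(t, c) \<in> ET"
  shows "subarb ET c \<subset> subarb ET t"
proof -
  have "subarb ET c \<subseteq> subarb ET t"
    using assms(2) by (auto simp: subarb_def intro: converse_rtrancl_into_rtrancl)
  moreover have "t \<notin> subarb ET c"
    using arborescence_acyclic[OF assms(1), of t] assms(2)
    by (auto simp: subarb_def intro: rtrancl_into_trancl2)
  ultimately show ?thesis by (auto simp: subarb_def)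
qed

lemma subarb_child:
  assumes "s \<in> subarb ET t" "s \<noteq> t"
  obtains c where "(t, c) \<in> ET" "s \<in> subarb ET c"
  using assms unfolding subarb_def by (auto elim: converse_rtranclE)

lemma dicycle_in_child_subarb:
  assumes dtd: "is_dtd V E N ET r \<beta> \<gamma>" and cyc: "is_dicycle V E cs"
    and avoid: "set cs \<inter> Gamma ET \<beta> \<gamma> t = {}" and meet: "set cs \<inter> subarb_verts ET \<beta> t \<noteq> {}"
  obtains c where "(t, c) \<in> ET" "set cs \<subseteq> subarb_verts ET \<beta> c"
proof -
  from meet obtain u s where u: "u \<in> set cs" "u \<in> \<beta> s" "s \<in> subarb ET t"
    unfolding subarb_verts_def by blast
  have "s \<noteq> t" using u avoid unfolding Gamma_def by auto
  then obtain c where c: "(t, c) \<in> ET" "s \<in> subarb ET c" using subarb_child u(3) by metis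
  have "\<forall>(d, t') \<in> ET. strongly_guards V E (\<gamma> (d, t')) (subarb_verts ET \<beta> t')"
    using dtd by (simp add: is_dtd_def subarb_verts_def)
  then have "strongly_guards V E (\<gamma> (t, c)) (subarb_verts ET \<beta> c)" using c(1) by auto
  moreover have "\<gamma> (t, c) \<subseteq> Gamma ET \<beta> \<gamma> t" using c(1) unfolding Gamma_def by auto
  then have "set cs \<inter> \<gamma> (t, c) = {}" using avoid by blast
  moreover have "set cs \<inter> subarb_verts ET \<beta> c \<noteq> {}"
    using u c(2) unfolding subarb_verts_def by blast
  ultimately have "set cs \<subseteq> subarb_verts ET \<beta> c" using strongly_guards_dicycle cyc by blast
  with c(1) show thesis by (rule that)
qed

lemma minimal_cycle_subarb:
  assumes dtd: "is_dtd V E N ET r \<beta> \<gamma>" and dicycles: "\<And>cs. Q cs \<Longrightarrow> is_dicycle V E cs"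
    and "Q C\<^sub>0" "set C\<^sub>0 \<subseteq> W"
  obtains t C where "t \<in> N" "Q C" "set C \<subseteq> W" "set C \<subseteq> subarb_verts ET \<beta> t"
    and "\<And>cs. Q cs \<Longrightarrow> set cs \<subseteq> W \<Longrightarrow> set cs \<inter> Gamma ET \<beta> \<gamma> t = {} \<Longrightarrow>
           set cs \<inter> subarb_verts ET \<beta> t = {}"
proof -
  have arb: "is_arborescence N ET r" using dtd by (simp add: is_dtd_def)
  then have ET_N: "ET \<subseteq> N \<times> N" and "r \<in> N" and reach: "\<forall>t \<in> N. (r, t) \<in> ET\<^sup>*"
    by (simp_all add: is_arborescence_def)
  define P where "P s \<longleftrightarrow> s \<in> N \<and> (\<exists>C. Q C \<and> set C \<subseteq> W \<and> set C \<subseteq> subarb_verts ET \<beta> s)" for s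
  have "(\<Union>t \<in> N. \<beta> t) = V" using dtd by (simp add: is_dtd_def)
  then have "V \<subseteq> subarb_verts ET \<beta> r" using reach unfolding subarb_verts_def subarb_def by blast
  moreover have "set C\<^sub>0 \<subseteq> V" using dicycles[OF \<open>Q C\<^sub>0\<close>] unfolding is_dicycle_def by blast
  ultimately have "P r" using assms(3,4) \<open>r \<in> N\<close> unfolding P_def by blast
  then obtain t where "P t" and least: "\<And>s. P s \<Longrightarrow> card (subarb ET t) \<le> card (subarb ET s)"
    using ex_has_least_nat[of P r "\<lambda>s. card (subarb ET s)"] by blast
  then have "t \<in> N" unfolding P_def by blast
  have "set cs \<inter> subarb_verts ET \<beta> t = {}"
    if cs: "Q cs" "set cs \<subseteq> W" "set cs \<inter> Gamma ET \<beta> \<gamma> t = {}" for cs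
  proof (rule ccontr)
    assume "set cs \<inter> subarb_verts ET \<beta> t \<noteq> {}"
    then obtain c where c: "(t, c) \<in> ET" "set cs \<subseteq> subarb_verts ET \<beta> c"
      using dicycle_in_child_subarb[OF dtd dicycles[OF cs(1)] cs(3)] by blast
    then have "P c" using cs ET_N unfolding P_def by blast
    moreover have "card (subarb ET c) < card (subarb ET t)"
      using psubset_card_mono[OF finite_subarb[OF arb \<open>t \<in> N\<close>] subarb_child_psubset[OF arb c(1)]] .
    ultimately show False using least by (meson not_le)
  qed
  with \<open>P t\<close> that show thesis unfolding P_def by blast
qed

lemma packing_or_hitting_set:
  assumes dtd: "is_dtd V E N ET r \<beta> \<gamma>" and "finite V"
    and width: "\<forall>t \<in> N. card (Gamma ET \<beta> \<gamma> t) \<le> k"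
    and dicycles: "\<And>cs. Q cs \<Longrightarrow> is_dicycle V E cs"
  shows "(\<exists>Cs. length Cs = Suc m \<and> cycle_packing Q W Cs) \<or>
         (\<exists>A. card A \<le> k * m \<and> hitting_set Q W A)"
proof (cases "\<exists>C. Q C \<and> set C \<subseteq> W")
  case False
  then show ?thesis by (intro disjI2 exI[of _ "{}"]) (auto simp: hitting_set_def)
next
  case True
  then show ?thesis
  proof (induction m arbitrary: W)
    case 0
    then obtain C where "Q C" "set C \<subseteq> W" by blast
    then have "cycle_packing Q W [C]" by (simp add: cycle_packing_def)
    then show ?case by (intro disjI1 exI[of _ "[C]"]) simp
  next
    case (Suc m)
    then obtain t C where t: "t \<in> N" and C: "Q C" "set C \<subseteq> W" "set C \<subseteq> subarb_verts ET \<beta> t"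
      and sep: "\<And>cs. Q cs \<Longrightarrow> set cs \<subseteq> W \<Longrightarrow> set cs \<inter> Gamma ET \<beta> \<gamma> t = {} \<Longrightarrow>
                  set cs \<inter> subarb_verts ET \<beta> t = {}"
      using minimal_cycle_subarb[OF dtd dicycles] by blast
    define G where "G = Gamma ET \<beta> \<gamma> t"
    define W' where "W' = W - subarb_verts ET \<beta> t - G"
    have "(\<exists>Cs. length Cs = Suc m \<and> cycle_packing Q W' Cs) \<or> (\<exists>A. card A \<le> k * m \<and> hitting_set Q W' A)"
    proof (cases "\<exists>C. Q C \<and> set C \<subseteq> W'")
      case False
      then show ?thesis by (intro disjI2 exI[of _ "{}"]) (auto simp: hitting_set_def)
    qed (rule Suc.IH)
    then show ?case
    proof (elim disjE exE conjE)
      fix Cs assume "length Cs = Suc m" "cycle_packing Q W' Cs"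
      moreover have "cycle_packing Q W Cs" "\<forall>D \<in> set Cs. set C \<inter> set D = {}"
        using \<open>cycle_packing Q W' Cs\<close> C(3) unfolding cycle_packing_def W'_def by auto
      ultimately have "length (C # Cs) = Suc (Suc m) \<and> cycle_packing Q W (C # Cs)"
        using cycle_packing_Cons C(1,2) by simp
      then show ?case by blast
    next
      fix A assume "card A \<le> k * m" "hitting_set Q W' A"
      have "\<forall>t \<in> N. \<beta> t \<subseteq> V" "\<forall>e \<in> ET. \<gamma> e \<subseteq> V" using dtd unfolding is_dtd_def by blast+
      then have "G \<subseteq> V" unfolding G_def Gamma_def using t by blast
      then have "card (G \<inter> W) \<le> k"
        using width t \<open>finite V\<close> unfolding G_def by (meson card_mono finite_subset inf_le1 le_trans)
      then have "card (A \<union> G \<inter> W) \<le> k * Suc m"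
        using \<open>card A \<le> k * m\<close> card_Un_le[of A "G \<inter> W"] by simp
      moreover have "hitting_set Q W (A \<union> G \<inter> W)"
        using \<open>hitting_set Q W' A\<close> sep unfolding hitting_set_def W'_def G_def by blast
      ultimately show ?case by blast
    qed
  qed
qed

lemma trivial_dtd: "is_dtd V E {0 :: nat} {} 0 (\<lambda>_. V) (\<lambda>_. {})"
  unfolding is_dtd_def is_arborescence_def strongly_guards_def subarb_def by auto

lemma dtw_attained:
  obtains N :: "nat set" and ET r \<beta> \<gamma>
  where "is_dtd V E N ET r \<beta> \<gamma>" "dtw V E = dtd_width N ET \<beta> \<gamma>"
proof -
  define M where "M N ET \<beta> \<gamma> = Max ((\<lambda>t. card (Gamma ET \<beta> \<gamma> t)) ` N)"
    for N :: "nat set" and ET and \<beta> :: "nat \<Rightarrow> 'a set" and \<gamma>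
  define P where "P n \<longleftrightarrow> (\<exists>(N :: nat set) ET r \<beta> \<gamma>. is_dtd V E N ET r \<beta> \<gamma> \<and> M N ET \<beta> \<gamma> = n)"
    for n
  have "P (M {0} {} (\<lambda>_. V) (\<lambda>_. {}))" using trivial_dtd unfolding P_def by blast
  then have "P (LEAST n. P n)" by (rule LeastI)
  then obtain N :: "nat set" and ET r \<beta> \<gamma>
    where dtd: "is_dtd V E N ET r \<beta> \<gamma>" and M_least: "M N ET \<beta> \<gamma> = (LEAST n. P n)"
    unfolding P_def by blast
  have "dtw V E = dtd_width N ET \<beta> \<gamma>"
    unfolding dtw_def
  proof (rule Least_equality)
    fix w assume "\<exists>(N' :: nat set) ET' r' \<beta>' \<gamma>'. is_dtd V E N' ET' r' \<beta>' \<gamma>' \<and> dtd_width N' ET' \<beta>' \<gamma>' = w"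
    then obtain N' :: "nat set" and ET' r' \<beta>' \<gamma>'
      where dtd': "is_dtd V E N' ET' r' \<beta>' \<gamma>'" and w: "dtd_width N' ET' \<beta>' \<gamma>' = w"
      by blast
    then have "P (M N' ET' \<beta>' \<gamma>')" unfolding P_def by blast
    then have "M N ET \<beta> \<gamma> \<le> M N' ET' \<beta>' \<gamma>'" unfolding M_least by (rule Least_le)
    then show "dtd_width N ET \<beta> \<gamma> \<le> w" using w unfolding dtd_width_def M_def by simp
  qed (use dtd in blast)
  with dtd that show thesis by blast
qed

lemma dtd_of_dtw_less:
  assumes "dtw V E < int k"
  obtains N :: "nat set" and ET r \<beta> \<gamma>
  where "is_dtd V E N ET r \<beta> \<gamma>" "\<forall>t \<in> N. card (Gamma ET \<beta> \<gamma> t) \<le> k"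
proof -
  obtain N :: "nat set" and ET r \<beta> \<gamma>
    where dtd: "is_dtd V E N ET r \<beta> \<gamma>" and "dtw V E = dtd_width N ET \<beta> \<gamma>"
    by (rule dtw_attained)
  then have max_le: "Max ((\<lambda>t. card (Gamma ET \<beta> \<gamma> t)) ` N) \<le> k"
    using assms unfolding dtd_width_def by simp
  have "finite N" using dtd by (simp add: is_dtd_def is_arborescence_def)
  have "card (Gamma ET \<beta> \<gamma> s) \<le> k" if "s \<in> N" for s
  proof -
    have "card (Gamma ET \<beta> \<gamma> s) \<le> Max ((\<lambda>t. card (Gamma ET \<beta> \<gamma> t)) ` N)"
      using \<open>finite N\<close> that by (intro Max_ge) auto
    then show ?thesis using max_le by linarith
  qed
  with dtd that show thesis by blast
qed

lemma even_dicycle_free_del_hitting_set: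
  assumes "hitting_set (is_even_dicycle V E) V A"
  shows "\<not> is_even_dicycle (del_verts_V V A) (del_verts_E E A) cs"
proof
  assume "is_even_dicycle (del_verts_V V A) (del_verts_E E A) cs"
  then have "is_even_dicycle V E cs" "set cs \<inter> A = {}"
    using is_dicycle_del_verts[of V A E cs] unfolding is_even_dicycle_def by auto
  moreover have "set cs \<subseteq> V" using calculation(1) unfolding is_even_dicycle_def is_dicycle_def by blast
  ultimately show False using assms unfolding hitting_set_def by blast
qed

theorem lemma3p1:
  fixes V :: "'a set" and E :: "('a \<times> 'a) set" and k t :: nat
  assumes "finite V" and "E \<subseteq> V \<times> V"
    and "k \<ge> 1" and "t \<ge> 1"
    and "dtw V E < int k"
  shows "(\<exists>Cs :: 'a list list. length Cs = t \<and>
            (\<forall>i < t. is_even_dicycle V E (Cs ! i)) \<and>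
            (\<forall>i < t. \<forall>j < t. i \<noteq> j \<longrightarrow> set (Cs ! i) \<inter> set (Cs ! j) = {}))
       \<or> (\<exists>A \<subseteq> V. card A \<le> k * (t - 1) \<and>
            \<not> (\<exists>cs. is_even_dicycle (del_verts_V V A) (del_verts_E E A) cs))"
proof -
  obtain N :: "nat set" and ET r \<beta> \<gamma>
    where dtd: "is_dtd V E N ET r \<beta> \<gamma>" and width: "\<forall>s \<in> N. card (Gamma ET \<beta> \<gamma> s) \<le> k"
    using dtd_of_dtw_less[OF assms(5)] by blast
  have "Suc (t - 1) = t" using assms(4) by simp
  then have "(\<exists>Cs. length Cs = t \<and> cycle_packing (is_even_dicycle V E) V Cs) \<or>
             (\<exists>A. card A \<le> k * (t - 1) \<and> hitting_set (is_even_dicycle V E) V A)"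
    using packing_or_hitting_set[OF dtd assms(1) width, of "is_even_dicycle V E" "t - 1" V]
    by (simp add: is_even_dicycle_def)
  then show ?thesis
  proof (elim disjE exE conjE)
    fix Cs assume Cs: "length Cs = t" "cycle_packing (is_even_dicycle V E) V Cs"
    then have "\<forall>i < t. is_even_dicycle V E (Cs ! i)"
      using nth_mem unfolding cycle_packing_def by blast
    then show ?thesis using Cs unfolding cycle_packing_def by blast
  next
    fix A assume "card A \<le> k * (t - 1)" "hitting_set (is_even_dicycle V E) V A"
    then show ?thesis using even_dicycle_free_del_hitting_set unfolding hitting_set_def by blast
  qed
qed

end
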